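(* Let $n$ be a positive integer and $V=\{v_1<v_2<\dots<v_n\}$ a set of $n$ positive integers with $v_n\le n v_1$. Then, with $t=\frac{1}{v_1+v_n}$, one has $\|tv\|\ge\frac{1}{n+1}$ for every $v\in V$; in particular $\kappa(V)\ge\frac{1}{n+1}$. Consequently, for every set $V=\{v_1<\dots<v_n\}$ of positive integers with $n\ge 2$ and every integer $a\ge \frac{v_n-nv_1}{n-1}$, $a\ge 0$, the translate $a+V=\{a+v: v\in V\}$ satisfies $\kappa(a+V)\ge\frac{1}{n+1}$.
   Context: For $x\in\mathbb{R}$, $\|x\|=\min\{x-\lfloor x\rfloor,\lceil x\rceil-x\}$ denotes the distance from $x$ to the nearest integer. For a finite nonempty set $V$ of positive integers, $\kappa(V)=\sup_{t\in(0,1)}\min_{v\in V}\|tv\|$. *)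

theory Defs
  imports Complex_Main
begin

definition dist_int :: "real \<Rightarrow> real" where
  "dist_int x = min (x - of_int \<lfloor>x\<rfloor>) (of_int \<lceil>x\<rceil> - x)"

definition kappa :: "nat set \<Rightarrow> real" where
  "kappa V = (SUP t\<in>{0<..<1::real}. Min ((\<lambda>v. dist_int (t * real v)) ` V))"

end

theory Submission
  imports Defs
begin

text \<open>With \<open>t = 1/(v\<^sub>1 + v\<^sub>n)\<close> every \<open>t v\<close> lies in the interval
  \<open>[v\<^sub>1/(v\<^sub>1+v\<^sub>n), v\<^sub>n/(v\<^sub>1+v\<^sub>n)]\<close>, which is symmetric about \<open>1/2\<close>, so its distance
  to the nearest integer is at least \<open>v\<^sub>1/(v\<^sub>1+v\<^sub>n) \<ge> 1/(n+1)\<close> once \<open>v\<^sub>n \<le> n v\<^sub>1\<close>.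
  For the translate, \<open>a\<close> large enough as stated brings \<open>a + V\<close> into the range
  \<open>a + v\<^sub>n \<le> n (a + v\<^sub>1)\<close>; the size of \<open>V\<close> plays no further role.\<close>

lemma dist_int_eq_min:
  assumes "0 < x" "x < 1"
  shows "dist_int x = min x (1 - x)"
proof -
  have "\<lfloor>x\<rfloor> = 0" "\<lceil>x\<rceil> = 1"
    using assms by (simp_all add: floor_eq_iff ceiling_eq_iff)
  then show ?thesis by (simp add: dist_int_def)
qed

lemma dist_int_le_one: "dist_int x \<le> 1"
  unfolding dist_int_def by linarith

lemma dist_int_divide_sum_ge:
  fixes m M x :: real
  assumes "0 < m" "m \<le> x" "x \<le> M"
  shows "m / (m + M) \<le> dist_int (x / (m + M))"
proof -
  have s: "0 < m + M" using assms by linarith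
  have lo: "m / (m + M) \<le> x / (m + M)"
    using assms s by (simp add: divide_right_mono)
  have "1 - x / (m + M) = (m + M - x) / (m + M)" using s by (simp add: field_simps)
  then have hi: "m / (m + M) \<le> 1 - x / (m + M)"
    using assms s by (simp add: divide_right_mono)
  have "0 < m / (m + M)" using assms s by simp
  then have "0 < x / (m + M)" "x / (m + M) < 1" using lo hi by linarith+
  then show ?thesis using dist_int_eq_min lo hi by simp
qed

lemma kappa_ge:
  assumes "finite V" "V \<noteq> {}" "0 < t" "t < 1"
    and "\<And>v. v \<in> V \<Longrightarrow> c \<le> dist_int (t * real v)"
  shows "c \<le> kappa V"
proof -
  let ?f = "\<lambda>s. Min ((\<lambda>v. dist_int (s * real v)) ` V)"
  obtain w where "w \<in> V" using assms(2) by blast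
  have "bdd_above (?f ` {0<..<1})"
  proof (rule bdd_aboveI[where M = 1])
    fix y assume "y \<in> ?f ` {0<..<1}"
    then obtain s where "y = ?f s" by blast
    then have "y \<le> dist_int (s * real w)" using assms(1) \<open>w \<in> V\<close> by simp
    then show "y \<le> 1" using dist_int_le_one order_trans by blast
  qed
  moreover have "c \<le> ?f t" using assms(1,2,5) by simp
  ultimately show ?thesis
    unfolding kappa_def using cSUP_upper[of t "{0<..<1}" ?f] assms(3,4)
    by (simp add: order_trans)
qed

lemma dist_int_scaled_ge:
  fixes V :: "nat set"
  assumes "finite V" "\<forall>v\<in>V. 0 < v" "Max V \<le> n * Min V" "v \<in> V"
  shows "1 / (real n + 1) \<le> dist_int (1 / real (Min V + Max V) * real v)"
proof -
  have "V \<noteq> {}" using assms(4) by blast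
  let ?m = "real (Min V)" and ?M = "real (Max V)"
  have "Min V \<le> v" "v \<le> Max V" "0 < Min V" using assms \<open>V \<noteq> {}\<close> by auto
  then have "?m / (?m + ?M) \<le> dist_int (real v / (?m + ?M))"
    by (intro dist_int_divide_sum_ge) auto
  moreover have "1 / (real n + 1) \<le> ?m / (?m + ?M)"
  proof -
    have "?M \<le> real n * ?m" using assms(3) by (metis of_nat_le_iff of_nat_mult)
    then show ?thesis using \<open>0 < Min V\<close> by (simp add: field_simps)
  qed
  ultimately show ?thesis by simp
qed

lemma kappa_ge_if_Max_le:
  fixes V :: "nat set"
  assumes "finite V" "V \<noteq> {}" "\<forall>v\<in>V. 0 < v" "Max V \<le> n * Min V"
  shows "1 / (real n + 1) \<le> kappa V"
proof -
  have "Min V \<in> V" "Min V \<le> Max V" using assms(1,2) by auto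
  then have "2 \<le> real (Min V + Max V)" using assms(3) by fastforce
  then show ?thesis
    using dist_int_scaled_ge[OF assms(1,3,4)]
    by (intro kappa_ge[OF assms(1,2), of "1 / real (Min V + Max V)"]) auto
qed

lemma translate_Max_le:
  fixes V :: "nat set" and a :: nat
  assumes "finite V" "V \<noteq> {}" "2 \<le> n"
    and "(real (Max V) - real n * real (Min V)) / (real n - 1) \<le> real a"
  shows "Max ((+) a ` V) \<le> n * Min ((+) a ` V)"
proof -
  have mono: "mono ((+) a)" by (simp add: mono_def)
  have "real (Max V) - real n * real (Min V) \<le> real a * (real n - 1)"
    using assms(3,4) by (simp add: pos_divide_le_eq)
  then have "real (a + Max V) \<le> real n * real (a + Min V)" by (simp add: algebra_simps)
  then have "a + Max V \<le> n * (a + Min V)" by (metis of_nat_le_iff of_nat_mult)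
  then show ?thesis
    using mono_Min_commute[OF mono assms(1,2)] mono_Max_commute[OF mono assms(1,2)] by simp
qed

theorem mainTheorem5:
  shows "(\<forall>(V::nat set) n. finite V \<and> card V = n \<and> n \<ge> 1 \<and> (\<forall>v\<in>V. v > 0)
            \<and> Max V \<le> n * Min V \<longrightarrow>
            (\<forall>v\<in>V. dist_int ((1 / real (Min V + Max V)) * real v) \<ge> 1 / (real n + 1))
            \<and> kappa V \<ge> 1 / (real n + 1))
       \<and> (\<forall>(V::nat set) n (a::nat). finite V \<and> card V = n \<and> n \<ge> 2 \<and> (\<forall>v\<in>V. v > 0)
            \<and> real a \<ge> (real (Max V) - real n * real (Min V)) / (real n - 1) \<longrightarrow>
            kappa ((\<lambda>v. a + v) ` V) \<ge> 1 / (real n + 1))"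
proof (intro conjI allI impI)
  fix V :: "nat set" and n
  assume "finite V \<and> card V = n \<and> n \<ge> 1 \<and> (\<forall>v\<in>V. v > 0) \<and> Max V \<le> n * Min V"
  moreover from this have "V \<noteq> {}" by auto
  ultimately show "\<forall>v\<in>V. dist_int ((1 / real (Min V + Max V)) * real v) \<ge> 1 / (real n + 1)"
    and "kappa V \<ge> 1 / (real n + 1)"
    using dist_int_scaled_ge kappa_ge_if_Max_le by blast+
next
  fix V :: "nat set" and n and a :: nat
  assume h: "finite V \<and> card V = n \<and> n \<ge> 2 \<and> (\<forall>v\<in>V. v > 0)
            \<and> real a \<ge> (real (Max V) - real n * real (Min V)) / (real n - 1)"
  then have "V \<noteq> {}" by auto
  then have "Max ((+) a ` V) \<le> n * Min ((+) a ` V)"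
    using h translate_Max_le by blast
  then show "kappa ((\<lambda>v. a + v) ` V) \<ge> 1 / (real n + 1)"
    using h \<open>V \<noteq> {}\<close> kappa_ge_if_Max_le[of "(+) a ` V" n] by auto
qed

end
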